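(* Let $(X,\mathcal S,\mu)$ be a finite positive (not necessarily complete) measure space, let $0\le k\le d$ be integers, and let $X\ni x\mapsto V_x\in\mathrm{Gr}_k(\mathbb R^d)$ be a map. The following are equivalent: 1) there is $X_1\in\mathcal S$ with $\mu(X\setminus X_1)=0$ such that $X_1\ni x\mapsto V_x$ is measurable, $\mathrm{Gr}_k(\mathbb R^d)$ being endowed with its Borel $\sigma$-algebra; 2) there is $X_2\in\mathcal S$ with $\mu(X\setminus X_2)=0$ and measurable maps $v_1,\dots,v_k:X_2\to\mathbb R^d$ such that for all $x\in X_2$, $\{v_1(x),\dots,v_k(x)\}$ is an orthonormal basis of $V_x$; 3) there is $X_3\in\mathcal S$ with $\mu(X\setminus X_3)=0$ and a bi-measurable bijection $\Lambda$ from $\{(x,v):x\in X_3,v\in V_x\}$ onto $X_3\times\mathbb R^k$ which covers the identity of $X$ and is a linear isometry on each fiber, i.e. for each $x\in X_3$, $\Lambda(x,\cdot)$ is a linear isometry from $V_x$ onto $\{x\}\times\mathbb R^k$.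
   Context: $\mathrm{Gr}_k(\mathbb R^d)$ is the Grassmannian of $k$-dimensional linear subspaces of $\mathbb R^d$; $\mathbb R^d$ carries its Euclidean inner product and Borel $\sigma$-algebra. The sets $\{(x,v):x\in X_3,v\in V_x\}\subset X\times\mathbb R^d$ and $X_3\times\mathbb R^k$ carry the traces of the product $\sigma$-algebras $\mathcal S\otimes\mathcal B(\mathbb R^d)$ and $\mathcal S\otimes\mathcal B(\mathbb R^k)$; a bijection is bi-measurable if it and its inverse are measurable. *)

theory Defs
  imports "HOL-Analysis.Analysis"
begin

definition grassmannian :: "nat \<Rightarrow> ('a::euclidean_space) set set" where
  "grassmannian k = {V. subspace V \<and> dim V = k}"

definition orth_proj :: "('a::euclidean_space) set \<Rightarrow> 'a \<Rightarrow> 'a" where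
  "orth_proj V x = (THE p. p \<in> V \<and> (\<forall>v\<in>V. (x - p) \<bullet> v = 0))"

definition grass_dist :: "('a::euclidean_space) set \<Rightarrow> 'a set \<Rightarrow> real" where
  "grass_dist V W = onorm (\<lambda>x. orth_proj V x - orth_proj W x)"

definition grass_open :: "nat \<Rightarrow> ('a::euclidean_space) set set \<Rightarrow> bool" where
  "grass_open k U \<longleftrightarrow> U \<subseteq> grassmannian k \<and>
     (\<forall>V\<in>U. \<exists>e>0. \<forall>W\<in>grassmannian k. grass_dist V W < e \<longrightarrow> W \<in> U)"

definition grass_borel :: "nat \<Rightarrow> ('a::euclidean_space) set measure" where
  "grass_borel k = sigma (grassmannian k) {U. grass_open k U}"

text \<open>R^k, modelled as extensional functions on {..<k} (allows k = 0),
  with its Borel sigma-algebra (finite product of Borel lines).\<close>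
definition Rk :: "nat \<Rightarrow> (nat \<Rightarrow> real) set" where
  "Rk k = ({..<k} \<rightarrow>\<^sub>E (UNIV :: real set))"

definition Rk_borel :: "nat \<Rightarrow> (nat \<Rightarrow> real) measure" where
  "Rk_borel k = (\<Pi>\<^sub>M i\<in>{..<k}. (borel :: real measure))"

end

theory Submission
  imports Defs "HOL-Library.More_List"
begin

text \<open>
  The three conditions are in fact equivalent for one and the same measurable set \<open>X\<close>.
  Since the Grassmannian carries the operator-norm distance of orthogonal projections, and this
  distance is controlled by the projections of the standard basis vectors, \<open>V\<close> is measurable iff
  every map \<open>x \<mapsto> P\<^bsub>V x\<^esub> y\<close> is. Gram-Schmidt applied to the projected basis \<open>P\<^bsub>V x\<^esub> b\<close>
  then yields a measurable orthonormal frame, and conversely a frame gives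
  \<open>P\<^bsub>V x\<^esub> y = \<Sum>\<^sub>i (y \<bullet> v\<^sub>i x) v\<^sub>i x\<close>. A frame defines the trivialisation
  \<open>(x, u) \<mapsto> (x, (u \<bullet> v\<^sub>i x)\<^sub>i)\<close> with inverse \<open>(x, c) \<mapsto> (x, \<Sum>\<^sub>i c\<^sub>i v\<^sub>i x)\<close>; conversely the
  inverse of a trivialisation maps the standard basis of \<open>\<real>\<^sup>k\<close> to a frame, which is orthonormal by
  polarisation.
\<close>

lemma ex1_orth_proj:
  fixes W :: "'a::euclidean_space set"
  assumes "subspace W"
  shows "\<exists>!p. p \<in> W \<and> (\<forall>v\<in>W. (y - p) \<bullet> v = 0)"
proof (rule ex_ex1I)
  obtain p z where "p \<in> span W" "\<And>w. w \<in> span W \<Longrightarrow> orthogonal z w" "y = p + z"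
    using orthogonal_subspace_decomp_exists[of W y] by blast
  then show "\<exists>p. p \<in> W \<and> (\<forall>v\<in>W. (y - p) \<bullet> v = 0)"
    using assms by (metis add_diff_cancel_left' orthogonal_def span_eq_iff)
next
  fix p q assume p: "p \<in> W \<and> (\<forall>v\<in>W. (y - p) \<bullet> v = 0)" and q: "q \<in> W \<and> (\<forall>v\<in>W. (y - q) \<bullet> v = 0)"
  then have "p - q \<in> W" using assms subspace_diff by blast
  then have "(p - q) \<bullet> (p - q) = (y - q) \<bullet> (p - q) - (y - p) \<bullet> (p - q)"
    by (simp add: inner_diff_left)
  also have "\<dots> = 0" using p q \<open>p - q \<in> W\<close> by simp
  finally show "p = q" by simp
qed

lemma
  fixes W :: "'a::euclidean_space set"
  assumes "subspace W"
  shows orth_proj_in: "orth_proj W y \<in> W"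
    and orth_proj_orthogonal: "v \<in> W \<Longrightarrow> (y - orth_proj W y) \<bullet> v = 0"
  using theI'[OF ex1_orth_proj[OF assms, of y]] unfolding orth_proj_def by auto

lemma orth_proj_eq:
  fixes W :: "'a::euclidean_space set"
  assumes "subspace W" "p \<in> W" "\<And>v. v \<in> W \<Longrightarrow> (y - p) \<bullet> v = 0"
  shows "orth_proj W y = p"
  unfolding orth_proj_def using assms by (intro the1_equality ex1_orth_proj) auto

lemma orth_proj_id:
  fixes W :: "'a::euclidean_space set"
  assumes "subspace W" "y \<in> W"
  shows "orth_proj W y = y"
  using assms by (intro orth_proj_eq) auto

lemma linear_orth_proj:
  fixes W :: "'a::euclidean_space set"
  assumes "subspace W"
  shows "linear (orth_proj W)"
proof (rule linearI)
  note P = orth_proj_in[OF assms] orth_proj_orthogonal[OF assms]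
  show "orth_proj W (a + b) = orth_proj W a + orth_proj W b" for a b
    using P[where y=a] P[where y=b]
    by (intro orth_proj_eq assms subspace_add) (auto simp: inner_diff_left inner_add_left algebra_simps)
  show "orth_proj W (c *\<^sub>R a) = c *\<^sub>R orth_proj W a" for c a
    using P[where y=a]
    by (intro orth_proj_eq assms subspace_scale)
       (auto simp flip: scaleR_right_diff_distrib)
qed

lemma norm_orth_proj_diff_le:
  fixes W W' :: "'a::euclidean_space set"
  assumes "subspace W" "subspace W'"
  shows "norm (orth_proj W y - orth_proj W' y) \<le> grass_dist W W' * norm y"
  unfolding grass_dist_def
  using assms by (intro onorm bounded_linear_sub linear_conv_bounded_linear[THEN iffD1] linear_orth_proj)

lemma grass_dist_le_sum_Basis:
  fixes W W' :: "'a::euclidean_space set"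
  assumes "subspace W" "subspace W'"
  shows "grass_dist W W' \<le> (\<Sum>b\<in>Basis. norm (orth_proj W b - orth_proj W' b))"
  unfolding grass_dist_def
proof (rule onorm_le)
  let ?L = "\<lambda>x. orth_proj W x - orth_proj W' x"
  have "linear ?L"
    using assms by (intro linear_compose_sub linear_orth_proj)
  fix y :: 'a
  have "norm (?L y) = norm (\<Sum>b\<in>Basis. (y \<bullet> b) *\<^sub>R ?L b)"
    using linear_sum[OF \<open>linear ?L\<close>] linear_scale[OF \<open>linear ?L\<close>]
    by (metis (no_types, lifting) euclidean_representation sum.cong)
  also have "\<dots> \<le> (\<Sum>b\<in>Basis. norm y * norm (?L b))"
    by (intro norm_sum[THEN order_trans] sum_mono)
       (simp add: mult_right_mono Basis_le_norm)
  finally show "norm (?L y) \<le> (\<Sum>b\<in>Basis. norm (?L b)) * norm y"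
    by (simp add: sum_distrib_left mult.commute)
qed

definition orthonormal_family :: "nat \<Rightarrow> (nat \<Rightarrow> 'a::real_inner) \<Rightarrow> bool" where
  "orthonormal_family k u \<longleftrightarrow> (\<forall>i<k. \<forall>j<k. u i \<bullet> u j = (if i = j then 1 else 0))"

lemma orthonormal_family_iff:
  "orthonormal_family k u \<longleftrightarrow>
     (\<forall>i<k. norm (u i) = 1) \<and> (\<forall>i<k. \<forall>j<k. i \<noteq> j \<longrightarrow> u i \<bullet> u j = 0)"
  unfolding orthonormal_family_def by (auto simp: norm_eq_1)

lemma inner_sum_orthonormal_family:
  assumes "orthonormal_family k u" "j < k"
  shows "(\<Sum>i<k. c i *\<^sub>R u i) \<bullet> u j = c j"
proof -
  have "(\<Sum>i<k. c i *\<^sub>R u i) \<bullet> u j = (\<Sum>i<k. if i = j then c i else 0)"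
    unfolding inner_sum_left
    by (rule sum.cong) (use assms in \<open>auto simp: orthonormal_family_def\<close>)
  then show ?thesis using assms(2) by simp
qed

lemma sum_in_span_family: "(\<Sum>i<k. c i *\<^sub>R u i) \<in> span (u ` {..<k})"
  by (intro span_sum span_mul span_base) auto

lemma orth_proj_span_orthonormal_family:
  fixes u :: "nat \<Rightarrow> 'a::euclidean_space"
  assumes "orthonormal_family k u"
  shows "orth_proj (span (u ` {..<k})) y = (\<Sum>i<k. (y \<bullet> u i) *\<^sub>R u i)"
proof (rule orth_proj_eq)
  fix v assume "v \<in> span (u ` {..<k})"
  then have "orthogonal (y - (\<Sum>i<k. (y \<bullet> u i) *\<^sub>R u i)) v"
    by (rule orthogonal_to_span)
       (use inner_sum_orthonormal_family[OF assms] in \<open>auto simp: orthogonal_def inner_diff_left\<close>)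
  then show "(y - (\<Sum>i<k. (y \<bullet> u i) *\<^sub>R u i)) \<bullet> v = 0"
    by (simp add: orthogonal_def)
qed (simp_all add: sum_in_span_family)

lemma orthonormal_family_expansion:
  fixes u :: "nat \<Rightarrow> 'a::euclidean_space"
  assumes "orthonormal_family k u" "w \<in> span (u ` {..<k})"
  shows "w = (\<Sum>i<k. (w \<bullet> u i) *\<^sub>R u i)"
proof -
  have "orth_proj (span (u ` {..<k})) w = w"
    using assms(2) by (intro orth_proj_id) simp_all
  then show ?thesis using orth_proj_span_orthonormal_family[OF assms(1)] by simp
qed

lemma
  assumes "orthonormal_family k u"
  shows independent_orthonormal_family: "independent (u ` {..<k})"
    and card_orthonormal_family: "card (u ` {..<k}) = k"
proof -
  have inj: "inj_on u {..<k}"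
    using assms unfolding orthonormal_family_def by (intro inj_onI) (metis lessThan_iff zero_neq_one)
  then show "card (u ` {..<k}) = k" by (simp add: card_image)
  show "independent (u ` {..<k})"
  proof (rule pairwise_orthogonal_independent)
    show "pairwise orthogonal (u ` {..<k})"
      using assms inj unfolding orthonormal_family_def pairwise_def orthogonal_def inj_on_def by auto
    show "0 \<notin> u ` {..<k}"
      using assms unfolding orthonormal_family_def by force
  qed
qed

lemma dim_span_orthonormal_family:
  assumes "orthonormal_family k u"
  shows "dim (span (u ` {..<k})) = k"
  using dim_span_eq_card_independent independent_orthonormal_family[OF assms]
    card_orthonormal_family[OF assms] by metis

lemma span_orthonormal_family_eq:
  fixes u :: "nat \<Rightarrow> 'a::euclidean_space"
  assumes "orthonormal_family k u" "u ` {..<k} \<subseteq> W" "subspace W" "dim W = k"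
  shows "span (u ` {..<k}) = W"
  using assms dim_span_orthonormal_family[OF assms(1)]
  by (intro subspace_dim_equal[of "span (u ` {..<k})" W] span_minimal) auto

text \<open>
  Vectors in the span of those already processed are dropped, so the length of the output depends
  on the input; measurability of a family of such lists is therefore expressed through their length
  and their entries padded with zeros (\<open>nth_default 0\<close>).
\<close>

definition gram_schmidt_step :: "'a::euclidean_space list \<Rightarrow> 'a \<Rightarrow> 'a list" where
  "gram_schmidt_step us w =
     (let r = w - (\<Sum>i<length us. (w \<bullet> us ! i) *\<^sub>R us ! i)
      in if r = 0 then us else us @ [r /\<^sub>R norm r])"

definition gram_schmidt :: "'a::euclidean_space list \<Rightarrow> 'a list" where
  "gram_schmidt ws = foldl gram_schmidt_step [] ws"

lemma orthonormal_family_snoc: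
  assumes "orthonormal_family (length us) (nth us)" "norm r = 1" "\<And>u. u \<in> set us \<Longrightarrow> r \<bullet> u = 0"
  shows "orthonormal_family (length (us @ [r])) (nth (us @ [r]))"
proof -
  have "r \<bullet> us ! i = 0" "us ! i \<bullet> r = 0" if "i < length us" for i
    using assms(3)[OF nth_mem[OF that]] by (simp_all only: inner_commute[of "us ! i"])
  then show ?thesis
    using assms(1,2) unfolding orthonormal_family_def by (auto simp: nth_append less_Suc_eq norm_eq_1)
qed

lemma
  assumes "orthonormal_family (length us) (nth us)"
  shows orthonormal_family_gram_schmidt_step:
      "orthonormal_family (length (gram_schmidt_step us w)) (nth (gram_schmidt_step us w))"
    and span_gram_schmidt_step: "span (set (gram_schmidt_step us w)) = span (insert w (set us))"
proof -
  define s where "s = (\<Sum>i<length us. (w \<bullet> us ! i) *\<^sub>R us ! i)"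
  have s: "s \<in> span (set us)"
    unfolding s_def by (intro span_sum span_mul span_base) auto
  have orth: "(w - s) \<bullet> u = 0" if "u \<in> set us" for u
  proof -
    obtain j where "j < length us" "u = us ! j" using \<open>u \<in> set us\<close> by (auto simp: in_set_conv_nth)
    then show ?thesis
      using inner_sum_orthonormal_family[OF assms] by (simp add: s_def inner_diff_left)
  qed
  have step: "gram_schmidt_step us w = (if w - s = 0 then us else us @ [(w - s) /\<^sub>R norm (w - s)])"
    by (simp add: gram_schmidt_step_def Let_def s_def)
  show "orthonormal_family (length (gram_schmidt_step us w)) (nth (gram_schmidt_step us w))"
  proof (cases "w - s = 0")
    case False
    then show ?thesis
      using orth step orthonormal_family_snoc[OF assms, of "(w - s) /\<^sub>R norm (w - s)"] by simp
  qed (use assms step in simp)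
  show "span (set (gram_schmidt_step us w)) = span (insert w (set us))"
  proof (cases "w - s = 0")
    case True
    then have "w \<in> span (set us)" using s by simp
    then show ?thesis using True step by (simp add: span_redundant)
  next
    case False
    define r where "r = (w - s) /\<^sub>R norm (w - s)"
    have us_sub: "set us \<subseteq> span (insert x (set us))" for x
      by (meson span_superset span_mono subset_insertI order_trans)
    have s': "s \<in> span (insert x (set us))" for x
      using s span_mono[OF subset_insertI] by blast
    have "w = norm (w - s) *\<^sub>R r + s" using False by (simp add: r_def)
    then have "w \<in> span (insert r (set us))"
      by (metis s' span_add span_base span_mul insertI1)
    moreover have "r \<in> span (insert w (set us))"
      unfolding r_def by (intro span_mul span_diff span_base insertI1 s')
    ultimately show ?thesis
      using False step us_sub unfolding span_eq by (simp add: r_def)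
  qed
qed

lemma span_Un_cong: "span A = span B \<Longrightarrow> span (A \<union> C) = span (B \<union> C)"
proof -
  assume eq: "span A = span B"
  have "A \<subseteq> span (B \<union> C)" "B \<subseteq> span (A \<union> C)"
    using span_superset[of A] span_superset[of B] span_mono[of B "B \<union> C"] span_mono[of A "A \<union> C"] eq
    by auto
  then show ?thesis
    unfolding span_eq using span_superset[of "A \<union> C"] span_superset[of "B \<union> C"] by auto
qed

lemma foldl_gram_schmidt_step:
  assumes "orthonormal_family (length us) (nth us)"
  shows "orthonormal_family (length (foldl gram_schmidt_step us ws)) (nth (foldl gram_schmidt_step us ws))
    \<and> span (set (foldl gram_schmidt_step us ws)) = span (set us \<union> set ws)"
  using assms
proof (induction ws arbitrary: us)
  case (Cons w ws)
  then show ?case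
    using orthonormal_family_gram_schmidt_step[OF Cons.prems] span_gram_schmidt_step[OF Cons.prems]
      span_Un_cong[of _ "insert w (set us)" "set ws"] by simp
qed simp

lemma
  shows orthonormal_family_gram_schmidt:
      "orthonormal_family (length (gram_schmidt ws)) (nth (gram_schmidt ws))"
    and span_gram_schmidt: "span (set (gram_schmidt ws)) = span (set ws)"
  using foldl_gram_schmidt_step[of "[]" ws] by (simp_all add: gram_schmidt_def orthonormal_family_def)

lemma measurable_gram_schmidt_step:
  fixes us :: "'x \<Rightarrow> 'a::euclidean_space list"
  assumes len[measurable]: "(\<lambda>x. length (us x)) \<in> measurable M (count_space UNIV)"
    and nth[measurable]: "\<And>i. (\<lambda>x. nth_default 0 (us x) i) \<in> borel_measurable M"
    and bound: "\<And>x. x \<in> space M \<Longrightarrow> length (us x) \<le> N"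
    and w[measurable]: "w \<in> borel_measurable M"
  shows "(\<lambda>x. length (gram_schmidt_step (us x) (w x))) \<in> measurable M (count_space UNIV)"
    and "(\<lambda>x. nth_default 0 (gram_schmidt_step (us x) (w x)) i) \<in> borel_measurable M"
proof -
  \<comment> \<open>padding the sum to the uniform bound \<open>N\<close> makes the residual a measurable expression\<close>
  define r where "r x = w x - (\<Sum>i<N. (w x \<bullet> nth_default 0 (us x) i) *\<^sub>R nth_default 0 (us x) i)" for x
  have [measurable]: "r \<in> borel_measurable M" unfolding r_def by measurable
  have "r x = w x - (\<Sum>i<length (us x). (w x \<bullet> us x ! i) *\<^sub>R us x ! i)" if "x \<in> space M" for x
    unfolding r_def using bound[OF that]
    by (intro arg_cong[where f="(-) (w x)"] sum.mono_neutral_cong_right) (auto simp: nth_default_def)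
  then have step: "gram_schmidt_step (us x) (w x) = (if r x = 0 then us x else us x @ [r x /\<^sub>R norm (r x)])"
    if "x \<in> space M" for x
    using that by (simp add: gram_schmidt_step_def Let_def)
  have "(\<lambda>x. if r x = 0 then length (us x) else Suc (length (us x))) \<in> measurable M (count_space UNIV)"
    by measurable
  then show "(\<lambda>x. length (gram_schmidt_step (us x) (w x))) \<in> measurable M (count_space UNIV)"
    by (rule measurable_cong[THEN iffD1, rotated]) (simp add: step)
  have "(\<lambda>x. if i < length (us x) then nth_default 0 (us x) i
           else if i = length (us x) \<and> r x \<noteq> 0 then r x /\<^sub>R norm (r x) else 0) \<in> borel_measurable M"
    by measurable
  then show "(\<lambda>x. nth_default 0 (gram_schmidt_step (us x) (w x)) i) \<in> borel_measurable M"
    by (rule measurable_cong[THEN iffD1, rotated]) (auto simp: step nth_default_def nth_append)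
qed

lemma measurable_foldl_gram_schmidt_step:
  fixes us :: "'x \<Rightarrow> 'a::euclidean_space list"
  assumes "(\<lambda>x. length (us x)) \<in> measurable M (count_space UNIV)"
    and "\<And>i. (\<lambda>x. nth_default 0 (us x) i) \<in> borel_measurable M"
    and "\<And>x. x \<in> space M \<Longrightarrow> length (us x) \<le> N"
    and "\<And>w. w \<in> set ws \<Longrightarrow> w \<in> borel_measurable M"
  shows "(\<lambda>x. nth_default 0 (foldl gram_schmidt_step (us x) (map (\<lambda>w. w x) ws)) i) \<in> borel_measurable M"
  using assms
proof (induction ws arbitrary: us N)
  case (Cons w ws)
  have "length (gram_schmidt_step (us x) (w x)) \<le> Suc N" if "x \<in> space M" for x
    using Cons.prems(3)[OF that] by (simp add: gram_schmidt_step_def Let_def)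
  then show ?case
    using Cons.IH[of "\<lambda>x. gram_schmidt_step (us x) (w x)"] Cons.prems
      measurable_gram_schmidt_step[of us M N w] by simp
qed simp

lemma measurable_gram_schmidt:
  fixes ws :: "('x \<Rightarrow> 'a::euclidean_space) list"
  assumes "\<And>w. w \<in> set ws \<Longrightarrow> w \<in> borel_measurable M"
  shows "(\<lambda>x. nth_default 0 (gram_schmidt (map (\<lambda>w. w x) ws)) i) \<in> borel_measurable M"
  unfolding gram_schmidt_def
  using assms by (intro measurable_foldl_gram_schmidt_step[where N=0]) (simp_all add: nth_default_def)

lemma grass_open_subset: "{U. grass_open k U} \<subseteq> Pow (grassmannian k)"
  by (auto simp: grass_open_def)

lemma
  shows space_grass_borel: "space (grass_borel k) = (grassmannian k :: 'a::euclidean_space set set)"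
    and sets_grass_borel: "sets (grass_borel k :: 'a set measure) = sigma_sets (grassmannian k) {U. grass_open k U}"
  unfolding grass_borel_def
  by (simp_all add: space_measure_of sets_measure_of grass_open_subset)

lemma grass_open_orth_proj_vimage:
  fixes S :: "'a::euclidean_space set"
  assumes "open S"
  shows "grass_open k {W \<in> grassmannian k. orth_proj W y \<in> S}"
  unfolding grass_open_def
proof (intro conjI ballI)
  fix W assume W: "W \<in> {W \<in> grassmannian k. orth_proj W y \<in> S}"
  then obtain e where e: "e > 0" "ball (orth_proj W y) e \<subseteq> S"
    using assms open_contains_ball by blast
  define e' where "e' = e / (norm y + 1)"
  have "e' > 0" "e' * norm y < e"
    using e(1) by (simp_all add: e'_def field_simps add_pos_nonneg)
  have close: "orth_proj W' y \<in> S" if "W' \<in> grassmannian k" "grass_dist W W' < e'" for W' :: "'a set"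
  proof -
    have "norm (orth_proj W y - orth_proj W' y) \<le> grass_dist W W' * norm y"
      using W that by (intro norm_orth_proj_diff_le) (auto simp: grassmannian_def)
    also have "\<dots> \<le> e' * norm y" using that by (intro mult_right_mono) auto
    finally show ?thesis using \<open>e' * norm y < e\<close> e(2) by (auto simp: dist_norm)
  qed
  show "\<exists>e>0. \<forall>W'\<in>grassmannian k. grass_dist W W' < e \<longrightarrow> W' \<in> {W \<in> grassmannian k. orth_proj W y \<in> S}"
    using \<open>e' > 0\<close> close by auto
qed auto

lemma measurable_orth_proj_grass_borel:
  fixes V :: "'x \<Rightarrow> 'a::euclidean_space set"
  assumes "V \<in> measurable N (grass_borel k)"
  shows "(\<lambda>x. orth_proj (V x) y) \<in> borel_measurable N"
proof (rule borel_measurableI)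
  fix S :: "'a set" assume "open S"
  let ?U = "{W \<in> grassmannian k. orth_proj W y \<in> S}"
  have "?U \<in> sets (grass_borel k)"
    unfolding sets_grass_borel using grass_open_orth_proj_vimage[OF \<open>open S\<close>] by auto
  then have "V -` ?U \<inter> space N \<in> sets N" by (rule measurable_sets[OF assms])
  moreover have "V -` ?U \<inter> space N = (\<lambda>x. orth_proj (V x) y) -` S \<inter> space N"
    using measurable_space[OF assms] by (auto simp: space_grass_borel)
  ultimately show "(\<lambda>x. orth_proj (V x) y) -` S \<inter> space N \<in> sets N" by simp
qed

lemma grass_open_eq_vimage_orth_proj_Basis:
  fixes U :: "'a::euclidean_space set set"
  assumes U: "grass_open k U" and bs: "set bs = Basis"
  obtains Op :: "(nat \<Rightarrow> 'a) set"
  where "open Op" "\<And>W. W \<in> grassmannian k \<Longrightarrow> W \<in> U \<longleftrightarrow> (\<lambda>n. orth_proj W (bs ! n)) \<in> Op"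
proof
  define nbhd where "nbhd W e = {q. \<forall>n<length bs. dist (q n) (orth_proj W (bs ! n)) < e}" for W e
  have open_nbhd: "open (nbhd W e)" for W e
  proof -
    have "nbhd W e = (\<Inter>n<length bs. (\<lambda>q. q n) -` ball (orth_proj W (bs ! n)) e)"
      by (auto simp: nbhd_def dist_commute)
    then show ?thesis
      by (auto intro!: open_INT open_vimage continuous_on_product_coordinates)
  qed
  let ?d = "real DIM('a)"
  define Op where "Op = \<Union>{nbhd W (e / ?d) | W e. W \<in> U \<and> e > 0 \<and>
                               (\<forall>W'\<in>grassmannian k. grass_dist W W' < e \<longrightarrow> W' \<in> U)}"
  show "open Op" unfolding Op_def using open_nbhd by auto
  fix V :: "'a set" assume V: "V \<in> grassmannian k"
  show "V \<in> U \<longleftrightarrow> (\<lambda>n. orth_proj V (bs ! n)) \<in> Op"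
  proof
    assume "V \<in> U"
    then obtain e where "e > 0" "\<forall>W'\<in>grassmannian k. grass_dist V W' < e \<longrightarrow> W' \<in> U"
      using U unfolding grass_open_def by blast
    moreover have "(\<lambda>n. orth_proj V (bs ! n)) \<in> nbhd V (e / ?d)"
      using \<open>e > 0\<close> by (simp add: nbhd_def)
    ultimately show "(\<lambda>n. orth_proj V (bs ! n)) \<in> Op" unfolding Op_def using \<open>V \<in> U\<close> by blast
  next
    assume "(\<lambda>n. orth_proj V (bs ! n)) \<in> Op"
    then obtain W e where W: "W \<in> U" "e > 0" "\<forall>W'\<in>grassmannian k. grass_dist W W' < e \<longrightarrow> W' \<in> U"
      and near: "(\<lambda>n. orth_proj V (bs ! n)) \<in> nbhd W (e / ?d)"
      unfolding Op_def by blast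
    have "b \<in> Basis \<Longrightarrow> \<exists>n<length bs. b = bs ! n" for b
      using bs by (metis in_set_conv_nth)
    then have "norm (orth_proj W b - orth_proj V b) < e / ?d" if "b \<in> Basis" for b
      using near that by (auto simp: nbhd_def dist_norm norm_minus_commute)
    moreover have "subspace W" "subspace V"
      using W(1) U V by (auto simp: grass_open_def grassmannian_def)
    ultimately have "grass_dist W V < (\<Sum>b\<in>(Basis :: 'a set). e / ?d)"
      by (intro grass_dist_le_sum_Basis[THEN order_le_less_trans] sum_strict_mono) auto
    then show "V \<in> U" using W(3) V by simp
  qed
qed

lemma measurable_grass_borelI:
  fixes V :: "'x \<Rightarrow> 'a::euclidean_space set"
  assumes V: "V \<in> space N \<rightarrow> grassmannian k"
    and proj: "\<And>y. (\<lambda>x. orth_proj (V x) y) \<in> borel_measurable N"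
  shows "V \<in> measurable N (grass_borel k)"
  unfolding grass_borel_def
proof (rule measurable_measure_of[OF grass_open_subset V])
  obtain bs where bs: "set bs = (Basis :: 'a set)"
    using finite_list[OF finite_Basis] by blast
  define Q where "Q x = (\<lambda>n. orth_proj (V x) (bs ! n))" for x
  have Q: "Q \<in> borel_measurable N"
    unfolding Q_def by (intro measurable_coordinatewise_then_product proj)
  fix U :: "'a set set" assume "U \<in> {U. grass_open k U}"
  then obtain Op where "open Op"
    and U: "\<And>W. W \<in> grassmannian k \<Longrightarrow> W \<in> U \<longleftrightarrow> (\<lambda>n. orth_proj W (bs ! n)) \<in> Op"
    using grass_open_eq_vimage_orth_proj_Basis[OF _ bs] by blast
  have "V x \<in> U \<longleftrightarrow> Q x \<in> Op" if "x \<in> space N" for x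
    unfolding Q_def using U V that by blast
  then have "V -` U \<inter> space N = Q -` Op \<inter> space N" by blast
  also have "\<dots> \<in> sets N"
    using Q \<open>open Op\<close> by (simp add: measurable_sets borel_open)
  finally show "V -` U \<inter> space N \<in> sets N" .
qed

definition measurable_orthonormal_frame ::
    "'x measure \<Rightarrow> nat \<Rightarrow> ('x \<Rightarrow> 'a::euclidean_space set) \<Rightarrow> (nat \<Rightarrow> 'x \<Rightarrow> 'a) \<Rightarrow> bool" where
  "measurable_orthonormal_frame N k V v \<longleftrightarrow>
     (\<forall>i<k. v i \<in> borel_measurable N) \<and>
     (\<forall>x\<in>space N. orthonormal_family k (\<lambda>i. v i x) \<and> span ((\<lambda>i. v i x) ` {..<k}) = V x)"

lemma span_orth_proj_Basis:
  fixes W :: "'a::euclidean_space set"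
  assumes "subspace W"
  shows "span (orth_proj W ` Basis) = W"
proof
  show "span (orth_proj W ` Basis) \<subseteq> W"
    using orth_proj_in[OF assms] assms by (intro span_minimal) auto
  show "W \<subseteq> span (orth_proj W ` Basis)"
  proof
    fix w assume "w \<in> W"
    have "w = orth_proj W (\<Sum>b\<in>Basis. (w \<bullet> b) *\<^sub>R b)"
      using orth_proj_id[OF assms \<open>w \<in> W\<close>] by (simp add: euclidean_representation)
    also have "\<dots> = (\<Sum>b\<in>Basis. (w \<bullet> b) *\<^sub>R orth_proj W b)"
      using linear_orth_proj[OF assms] by (simp add: linear_sum linear_scale)
    also have "\<dots> \<in> span (orth_proj W ` Basis)"
      by (intro span_sum span_mul span_base) auto
    finally show "w \<in> span (orth_proj W ` Basis)" .
  qed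
qed

lemma measurable_orthonormal_frame_of_grass_borel:
  fixes V :: "'x \<Rightarrow> 'a::euclidean_space set"
  assumes V: "V \<in> measurable N (grass_borel k)"
  shows "\<exists>v. measurable_orthonormal_frame N k V v"
proof -
  obtain bs where bs: "set bs = (Basis :: 'a set)"
    using finite_list[OF finite_Basis] by blast
  define L where "L x = gram_schmidt (map (\<lambda>b. orth_proj (V x) b) bs)" for x
  define v where "v i x = nth_default 0 (L x) i" for i x
  have "v i \<in> borel_measurable N" for i
    using measurable_gram_schmidt[of "map (\<lambda>b x. orth_proj (V x) b) bs" N i]
      measurable_orth_proj_grass_borel[OF V]
    by (auto simp: v_def[abs_def] L_def comp_def)
  moreover have "orthonormal_family k (\<lambda>i. v i x) \<and> span ((\<lambda>i. v i x) ` {..<k}) = V x"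
    if x: "x \<in> space N" for x
  proof -
    have "V x \<in> grassmannian k"
      using measurable_space[OF V x] by (simp add: space_grass_borel)
    then have sub: "subspace (V x)" and dim: "dim (V x) = k"
      by (simp_all add: grassmannian_def)
    have onf: "orthonormal_family (length (L x)) (nth (L x))"
      unfolding L_def by (rule orthonormal_family_gram_schmidt)
    have L_set: "set (L x) = nth (L x) ` {..<length (L x)}"
      by (auto simp: in_set_conv_nth)
    have span: "span (set (L x)) = V x"
      using span_orth_proj_Basis[OF sub] by (simp add: L_def span_gram_schmidt bs)
    then have "length (L x) = k"
      using dim dim_span_orthonormal_family[OF onf] L_set by simp
    moreover have "(\<lambda>i. v i x) ` {..<length (L x)} = set (L x)"
      using L_set by (auto simp: v_def nth_default_def)
    ultimately show ?thesis
      using onf span by (auto simp: orthonormal_family_def v_def nth_default_def)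
  qed
  ultimately show ?thesis
    unfolding measurable_orthonormal_frame_def by blast
qed

lemma grass_borel_measurable_of_orthonormal_frame:
  fixes V :: "'x \<Rightarrow> 'a::euclidean_space set"
  assumes "measurable_orthonormal_frame N k V v"
  shows "V \<in> measurable N (grass_borel k)"
proof (rule measurable_grass_borelI)
  have frame: "orthonormal_family k (\<lambda>i. v i x)" "span ((\<lambda>i. v i x) ` {..<k}) = V x"
    if "x \<in> space N" for x
    using assms that by (simp_all add: measurable_orthonormal_frame_def)
  show "V \<in> space N \<rightarrow> grassmannian k"
  proof
    fix x assume "x \<in> space N"
    then have "V x = span ((\<lambda>i. v i x) ` {..<k})" by (simp add: frame)
    then show "V x \<in> grassmannian k"
      using dim_span_orthonormal_family[OF frame(1)] \<open>x \<in> space N\<close>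
      by (simp add: grassmannian_def)
  qed
  fix y
  have "(\<lambda>x. \<Sum>i<k. (y \<bullet> v i x) *\<^sub>R v i x) \<in> borel_measurable N"
    using assms unfolding measurable_orthonormal_frame_def
    by (intro borel_measurable_sum borel_measurable_scaleR borel_measurable_inner) auto
  then show "(\<lambda>x. orth_proj (V x) y) \<in> borel_measurable N"
    by (rule measurable_cong[THEN iffD1, rotated])
       (simp add: frame(2)[symmetric] orth_proj_span_orthonormal_family frame(1))
qed

lemma grass_borel_measurable_iff_orthonormal_frame:
  fixes V :: "'x \<Rightarrow> 'a::euclidean_space set"
  shows "V \<in> measurable N (grass_borel k) \<longleftrightarrow> (\<exists>v. measurable_orthonormal_frame N k V v)"
  using grass_borel_measurable_of_orthonormal_frame measurable_orthonormal_frame_of_grass_borel by blast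

definition linear_isometry_onto_Rk :: "nat \<Rightarrow> 'a::real_normed_vector set \<Rightarrow> ('a \<Rightarrow> nat \<Rightarrow> real) \<Rightarrow> bool" where
  "linear_isometry_onto_Rk k W L \<longleftrightarrow>
     bij_betw L W (Rk k) \<and>
     (\<forall>u\<in>W. \<forall>w\<in>W. \<forall>i<k. L (u + w) i = L u i + L w i) \<and>
     (\<forall>u\<in>W. \<forall>c::real. \<forall>i<k. L (c *\<^sub>R u) i = c * L u i) \<and>
     (\<forall>u\<in>W. (\<Sum>i<k. (L u i)\<^sup>2) = (norm u)\<^sup>2)"

lemma restrict_in_Rk [simp]: "(\<lambda>i\<in>{..<k}. f i) \<in> Rk k"
  by (simp add: Rk_def)

lemma coordinates_sum_orthonormal_family:
  assumes "orthonormal_family k u" "c \<in> Rk k"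
  shows "(\<lambda>i\<in>{..<k}. (\<Sum>j<k. c j *\<^sub>R u j) \<bullet> u i) = c"
proof
  fix i
  have "c \<in> extensional {..<k}" using assms(2) by (simp add: Rk_def PiE_def)
  then show "(\<lambda>i\<in>{..<k}. (\<Sum>j<k. c j *\<^sub>R u j) \<bullet> u i) i = c i"
    using inner_sum_orthonormal_family[OF assms(1)] by (simp add: extensional_def)
qed

lemma linear_isometry_onto_Rk_coordinates:
  fixes u :: "nat \<Rightarrow> 'a::euclidean_space"
  assumes "orthonormal_family k u"
  shows "linear_isometry_onto_Rk k (span (u ` {..<k})) (\<lambda>w. \<lambda>i\<in>{..<k}. w \<bullet> u i)"
  unfolding linear_isometry_onto_Rk_def
proof (intro conjI ballI allI impI)
  have "(\<Sum>j<k. (\<lambda>i\<in>{..<k}. w \<bullet> u i) j *\<^sub>R u j) = w" if "w \<in> span (u ` {..<k})" for w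
    using orthonormal_family_expansion[OF assms that] by simp
  then show "bij_betw (\<lambda>w. \<lambda>i\<in>{..<k}. w \<bullet> u i) (span (u ` {..<k})) (Rk k)"
    by (intro bij_betw_byWitness[where f'="\<lambda>c. \<Sum>j<k. c j *\<^sub>R u j"])
       (auto simp: sum_in_span_family coordinates_sum_orthonormal_family[OF assms])
  fix w assume w: "w \<in> span (u ` {..<k})"
  have "(norm w)\<^sup>2 = w \<bullet> (\<Sum>i<k. (w \<bullet> u i) *\<^sub>R u i)"
    using orthonormal_family_expansion[OF assms w] by (simp add: dot_square_norm)
  then show "(\<Sum>i<k. ((\<lambda>i\<in>{..<k}. w \<bullet> u i) i)\<^sup>2) = (norm w)\<^sup>2"
    by (simp add: inner_sum_right power2_eq_square)
qed (simp_all add: inner_add_left)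

lemma inner_linear_isometry_onto_Rk:
  assumes "subspace W" "linear_isometry_onto_Rk k W L" "u \<in> W" "w \<in> W"
  shows "u \<bullet> w = (\<Sum>l<k. L u l * L w l)"
proof -
  have add: "L (u + w) l = L u l + L w l" if "l < k" for l
    using assms that by (simp add: linear_isometry_onto_Rk_def)
  have norm: "(\<Sum>l<k. (L z l)\<^sup>2) = (norm z)\<^sup>2" if "z \<in> W" for z
    using assms(2) that by (simp add: linear_isometry_onto_Rk_def)
  have "(norm (u + w))\<^sup>2 = (\<Sum>l<k. (L u l + L w l)\<^sup>2)"
    using norm[OF subspace_add[OF assms(1,3,4)]] add by simp
  also have "\<dots> = (norm u)\<^sup>2 + 2 * (\<Sum>l<k. L u l * L w l) + (norm w)\<^sup>2"
    by (simp add: norm[OF assms(3), symmetric] norm[OF assms(4), symmetric]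
        power2_sum sum.distrib sum_distrib_left mult.assoc)
  finally show ?thesis by (simp add: dot_norm)
qed

lemma orthonormal_family_of_linear_isometry_onto_Rk:
  fixes u :: "nat \<Rightarrow> 'a::euclidean_space"
  assumes W: "subspace W" "dim W = k" and L: "linear_isometry_onto_Rk k W L"
    and u: "\<And>i. i < k \<Longrightarrow> u i \<in> W \<and> L (u i) = (\<lambda>j\<in>{..<k}. if j = i then 1 else 0)"
  shows "orthonormal_family k u" and "span (u ` {..<k}) = W"
proof -
  show onf: "orthonormal_family k u"
    unfolding orthonormal_family_def
  proof (intro allI impI)
    fix i j assume "i < k" "j < k"
    then have "u i \<bullet> u j = (\<Sum>l<k. L (u i) l * L (u j) l)"
      using u by (intro inner_linear_isometry_onto_Rk[OF W(1) L]) auto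
    also have "\<dots> = (\<Sum>l<k. if l = i then (if i = j then 1 else 0) else 0)"
      using u \<open>i < k\<close> \<open>j < k\<close> by (intro sum.cong) auto
    also have "\<dots> = (if i = j then 1 else 0)"
      using \<open>i < k\<close> by simp
    finally show "u i \<bullet> u j = (if i = j then 1 else 0)" .
  qed
  show "span (u ` {..<k}) = W"
    using u by (intro span_orthonormal_family_eq[OF onf _ W]) auto
qed

definition measurable_trivialization ::
    "'x measure \<Rightarrow> 'x set \<Rightarrow> nat \<Rightarrow> ('x \<Rightarrow> 'a::euclidean_space set) \<Rightarrow>
       ('x \<times> 'a \<Rightarrow> 'x \<times> (nat \<Rightarrow> real)) \<Rightarrow> bool" where
  "measurable_trivialization M X k V \<Lambda> \<longleftrightarrow>
     bij_betw \<Lambda> (Sigma X V) (X \<times> Rk k) \<and>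
     \<Lambda> \<in> measurable (restrict_space (M \<Otimes>\<^sub>M borel) (Sigma X V))
                   (restrict_space (M \<Otimes>\<^sub>M Rk_borel k) (X \<times> Rk k)) \<and>
     the_inv_into (Sigma X V) \<Lambda> \<in> measurable (restrict_space (M \<Otimes>\<^sub>M Rk_borel k) (X \<times> Rk k))
                                            (restrict_space (M \<Otimes>\<^sub>M borel) (Sigma X V)) \<and>
     (\<forall>x\<in>X. \<forall>u\<in>V x. fst (\<Lambda> (x, u)) = x) \<and>
     (\<forall>x\<in>X. linear_isometry_onto_Rk k (V x) (\<lambda>u. snd (\<Lambda> (x, u))))"

lemma measurable_trivialization_of_orthonormal_frame:
  fixes v :: "nat \<Rightarrow> 'x \<Rightarrow> 'a::euclidean_space"
  assumes X: "X \<in> sets M" and frame: "measurable_orthonormal_frame (restrict_space M X) k V v"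
  shows "measurable_trivialization M X k V (\<lambda>(x, u). (x, \<lambda>i\<in>{..<k}. u \<bullet> v i x))"
proof -
  let ?G = "restrict_space (M \<Otimes>\<^sub>M borel) (Sigma X V)"
  let ?R = "restrict_space (M \<Otimes>\<^sub>M Rk_borel k) (X \<times> Rk k)"
  define \<Lambda> where "\<Lambda> = (\<lambda>(x, u). (x, \<lambda>i\<in>{..<k}. u \<bullet> v i x))"
  define \<Psi> where "\<Psi> = (\<lambda>(x, c). (x, \<Sum>j<k. c j *\<^sub>R v j x))"
  have onf: "orthonormal_family k (\<lambda>i. v i x)" and span: "span ((\<lambda>i. v i x) ` {..<k}) = V x"
    if "x \<in> X" for x
    using frame that X by (simp_all add: measurable_orthonormal_frame_def)
  have iso: "linear_isometry_onto_Rk k (V x) (\<lambda>u. snd (\<Lambda> (x, u)))" if "x \<in> X" for x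
    using linear_isometry_onto_Rk_coordinates[OF onf[OF that]] span[OF that] by (simp add: \<Lambda>_def)
  have \<Psi>\<Lambda>: "\<Psi> (\<Lambda> p) = p" if "p \<in> Sigma X V" for p
    using that orthonormal_family_expansion[OF onf, symmetric] span by (auto simp: \<Lambda>_def \<Psi>_def)
  have \<Lambda>\<Psi>: "\<Lambda> (\<Psi> p) = p" if "p \<in> X \<times> Rk k" for p
    using that coordinates_sum_orthonormal_family[OF onf] by (auto simp: \<Lambda>_def \<Psi>_def)
  have \<Lambda>_into: "\<Lambda> \<in> Sigma X V \<rightarrow> X \<times> Rk k" by (auto simp: \<Lambda>_def)
  have \<Psi>_into: "\<Psi> \<in> X \<times> Rk k \<rightarrow> Sigma X V"
    using span sum_in_span_family by (fastforce simp: \<Psi>_def)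
  have bij: "bij_betw \<Lambda> (Sigma X V) (X \<times> Rk k)"
    using \<Psi>\<Lambda> \<Lambda>\<Psi> funcset_image[OF \<Lambda>_into] funcset_image[OF \<Psi>_into]
    by (intro bij_betw_byWitness[where f'=\<Psi>]) auto
  have XM: "X \<subseteq> space M" using X by (rule sets.sets_into_space)
  have space_G: "space ?G = Sigma X V" and space_R: "space ?R = X \<times> Rk k"
    using XM by (auto simp: space_restrict_space space_pair_measure Rk_borel_def space_PiM Rk_def)
  have [measurable]: "v i \<in> borel_measurable (restrict_space M X)" if "i < k" for i
    using frame that by (simp add: measurable_orthonormal_frame_def)
  have [measurable]: "fst \<in> measurable ?G (restrict_space M X)" "fst \<in> measurable ?R (restrict_space M X)"
    by (auto intro!: measurable_restrict_space3[OF measurable_fst])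
  have [measurable]: "fst \<in> measurable ?G M" "snd \<in> borel_measurable ?G"
    "fst \<in> measurable ?R M" "snd \<in> measurable ?R (Rk_borel k)"
    by (auto intro!: measurable_restrict_space1)
  have "\<Lambda> \<in> measurable ?G ?R"
    using \<Lambda>_into
    by (intro measurable_restrict_space2) (auto simp: space_G \<Lambda>_def Rk_borel_def split_beta')
  moreover have "\<Psi> \<in> measurable ?R ?G"
  proof (rule measurable_restrict_space2)
    show "\<Psi> \<in> space ?R \<rightarrow> Sigma X V" using \<Psi>_into by (simp add: space_R)
    have "(\<lambda>p. snd p j) \<in> borel_measurable ?R" if "j < k" for j
      using that unfolding Rk_borel_def
      by (intro measurable_compose[OF measurable_restrict_space1[OF measurable_snd]
            measurable_component_singleton]) auto
    then have "(\<lambda>p. \<Sum>j<k. snd p j *\<^sub>R v j (fst p)) \<in> borel_measurable ?R"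
      by (intro borel_measurable_sum borel_measurable_scaleR) auto
    then show "\<Psi> \<in> measurable ?R (M \<Otimes>\<^sub>M borel)"
      by (simp add: \<Psi>_def split_beta')
  qed
  then have "the_inv_into (Sigma X V) \<Lambda> \<in> measurable ?R ?G"
  proof (rule measurable_cong[THEN iffD1, rotated])
    show "\<Psi> p = the_inv_into (Sigma X V) \<Lambda> p" if "p \<in> space ?R" for p
      using that \<Lambda>\<Psi> \<Psi>_into
      by (intro the_inv_into_f_eq[OF bij_betw_imp_inj_on[OF bij], symmetric]) (auto simp: space_R)
  qed
  ultimately show ?thesis
    unfolding measurable_trivialization_def \<Lambda>_def[symmetric]
    using bij iso by (auto simp: \<Lambda>_def)
qed

lemma measurable_orthonormal_frame_of_trivialization:
  fixes V :: "'x \<Rightarrow> 'a::euclidean_space set"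
  assumes X: "X \<in> sets M" and V: "\<And>x. x \<in> X \<Longrightarrow> V x \<in> grassmannian k"
    and \<Lambda>: "measurable_trivialization M X k V \<Lambda>"
  shows "\<exists>v. measurable_orthonormal_frame (restrict_space M X) k V v"
proof -
  let ?\<Psi> = "the_inv_into (Sigma X V) \<Lambda>"
  define e where "e i = (\<lambda>j\<in>{..<k}. if j = i then 1 else 0 :: real)" for i
  define v where "v i x = snd (?\<Psi> (x, e i))" for i x
  have bij: "bij_betw \<Lambda> (Sigma X V) (X \<times> Rk k)" and fst_\<Lambda>: "\<And>x u. x \<in> X \<Longrightarrow> u \<in> V x \<Longrightarrow> fst (\<Lambda> (x, u)) = x"
    using \<Lambda> by (simp_all add: measurable_trivialization_def)
  have pair: "(\<lambda>x. (x, e i)) \<in> measurable (restrict_space M X) (restrict_space (M \<Otimes>\<^sub>M Rk_borel k) (X \<times> Rk k))" for i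
    using X by (intro measurable_restrict_space3 measurable_Pair measurable_ident_sets measurable_const)
      (auto simp: e_def Rk_borel_def space_PiM Rk_def)
  have inv: "?\<Psi> \<in> measurable (restrict_space (M \<Otimes>\<^sub>M Rk_borel k) (X \<times> Rk k))
                               (restrict_space (M \<Otimes>\<^sub>M borel) (Sigma X V))"
    using \<Lambda> by (simp add: measurable_trivialization_def)
  have "v i \<in> borel_measurable (restrict_space M X)" for i
    unfolding v_def
    by (rule measurable_compose[OF measurable_compose[OF pair inv] measurable_restrict_space1[OF measurable_snd]])
  moreover have "orthonormal_family k (\<lambda>i. v i x) \<and> span ((\<lambda>i. v i x) ` {..<k}) = V x"
    if x: "x \<in> X" for x
  proof -
    have "v i x \<in> V x \<and> snd (\<Lambda> (x, v i x)) = e i" for i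
    proof -
      have "(x, e i) \<in> X \<times> Rk k" using x by (simp add: e_def)
      then have "?\<Psi> (x, e i) \<in> Sigma X V" "\<Lambda> (?\<Psi> (x, e i)) = (x, e i)"
        using bij bij_betw_the_inv_into[OF bij] by (auto simp: bij_betw_def f_the_inv_into_f)
      moreover from this(1) obtain x' u where "?\<Psi> (x, e i) = (x', u)" "x' \<in> X" "u \<in> V x'" by auto
      ultimately show ?thesis using fst_\<Lambda> by (force simp: v_def)
    qed
    moreover have "subspace (V x)" "dim (V x) = k" using V[OF x] by (simp_all add: grassmannian_def)
    moreover have "linear_isometry_onto_Rk k (V x) (\<lambda>u. snd (\<Lambda> (x, u)))"
      using \<Lambda> x by (simp add: measurable_trivialization_def)
    ultimately show ?thesis
      using orthonormal_family_of_linear_isometry_onto_Rk[where u="\<lambda>i. v i x"] by (simp add: e_def)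
  qed
  ultimately show ?thesis
    using X unfolding measurable_orthonormal_frame_def by auto
qed

lemma orthonormal_frame_iff_measurable_trivialization:
  fixes V :: "'x \<Rightarrow> 'a::euclidean_space set"
  assumes "X \<in> sets M" "\<And>x. x \<in> X \<Longrightarrow> V x \<in> grassmannian k"
  shows "(\<exists>v. measurable_orthonormal_frame (restrict_space M X) k V v) \<longleftrightarrow>
         (\<exists>\<Lambda>. measurable_trivialization M X k V \<Lambda>)"
proof
  assume "\<exists>v. measurable_orthonormal_frame (restrict_space M X) k V v"
  then show "\<exists>\<Lambda>. measurable_trivialization M X k V \<Lambda>"
    using measurable_trivialization_of_orthonormal_frame[OF assms(1)] by blast
next
  assume "\<exists>\<Lambda>. measurable_trivialization M X k V \<Lambda>"
  then show "\<exists>v. measurable_orthonormal_frame (restrict_space M X) k V v"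
    using measurable_orthonormal_frame_of_trivialization[of X M V k] assms by blast
qed

lemma image_lessThan_eq_setcompr: "f ` {..<k} = {f i |i. i < k}"
  by auto

theorem theoremA8:
  fixes M :: "'x measure" and k :: nat and V :: "'x \<Rightarrow> ('a::euclidean_space) set"
  assumes "finite_measure M"
    and "k \<le> DIM('a)"
    and "\<forall>x\<in>space M. V x \<in> grassmannian k"
  shows
    "((\<exists>X1\<in>sets M. emeasure M (space M - X1) = 0 \<and>
         V \<in> measurable (restrict_space M X1) (grass_borel k))
      \<longleftrightarrow>
      (\<exists>X2\<in>sets M. emeasure M (space M - X2) = 0 \<and>
         (\<exists>v :: nat \<Rightarrow> 'x \<Rightarrow> 'a.
            (\<forall>i<k. v i \<in> borel_measurable (restrict_space M X2)) \<and>
            (\<forall>x\<in>X2. (\<forall>i<k. norm (v i x) = 1) \<and>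
                     (\<forall>i<k. \<forall>j<k. i \<noteq> j \<longrightarrow> v i x \<bullet> v j x = 0) \<and>
                     span {v i x | i. i < k} = V x))))
     \<and>
     ((\<exists>X2\<in>sets M. emeasure M (space M - X2) = 0 \<and>
         (\<exists>v :: nat \<Rightarrow> 'x \<Rightarrow> 'a.
            (\<forall>i<k. v i \<in> borel_measurable (restrict_space M X2)) \<and>
            (\<forall>x\<in>X2. (\<forall>i<k. norm (v i x) = 1) \<and>
                     (\<forall>i<k. \<forall>j<k. i \<noteq> j \<longrightarrow> v i x \<bullet> v j x = 0) \<and>
                     span {v i x | i. i < k} = V x)))
      \<longleftrightarrow>
      (\<exists>X3\<in>sets M. emeasure M (space M - X3) = 0 \<and>
         (\<exists>\<Lambda> :: 'x \<times> 'a \<Rightarrow> 'x \<times> (nat \<Rightarrow> real).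
            bij_betw \<Lambda> {(x, u). x \<in> X3 \<and> u \<in> V x} (X3 \<times> Rk k) \<and>
            \<Lambda> \<in> measurable (restrict_space (M \<Otimes>\<^sub>M (borel :: 'a measure)) {(x, u). x \<in> X3 \<and> u \<in> V x})
                          (restrict_space (M \<Otimes>\<^sub>M Rk_borel k) (X3 \<times> Rk k)) \<and>
            the_inv_into {(x, u). x \<in> X3 \<and> u \<in> V x} \<Lambda> \<in>
              measurable (restrict_space (M \<Otimes>\<^sub>M Rk_borel k) (X3 \<times> Rk k))
                         (restrict_space (M \<Otimes>\<^sub>M (borel :: 'a measure)) {(x, u). x \<in> X3 \<and> u \<in> V x}) \<and>
            (\<forall>x\<in>X3. \<forall>u\<in>V x. fst (\<Lambda> (x, u)) = x) \<and>
            (\<forall>x\<in>X3.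
               bij_betw (\<lambda>u. snd (\<Lambda> (x, u))) (V x) (Rk k) \<and>
               (\<forall>u\<in>V x. \<forall>w\<in>V x. \<forall>i<k.
                  snd (\<Lambda> (x, u + w)) i = snd (\<Lambda> (x, u)) i + snd (\<Lambda> (x, w)) i) \<and>
               (\<forall>u\<in>V x. \<forall>c::real. \<forall>i<k.
                  snd (\<Lambda> (x, c *\<^sub>R u)) i = c * snd (\<Lambda> (x, u)) i) \<and>
               (\<forall>u\<in>V x. (\<Sum>i<k. (snd (\<Lambda> (x, u)) i)\<^sup>2) = (norm u)\<^sup>2)))))"
    (is "((\<exists>X\<in>_. _ \<and> ?grass X) \<longleftrightarrow> (\<exists>X\<in>_. _ \<and> ?frame X)) \<and>
         ((\<exists>X\<in>_. _ \<and> _) \<longleftrightarrow> (\<exists>X\<in>_. _ \<and> ?triv X))")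
proof -
  have grass_frame: "?grass X \<longleftrightarrow> ?frame X" if "X \<in> sets M" for X
    using grass_borel_measurable_iff_orthonormal_frame[of V "restrict_space M X" k] that
    by (simp add: measurable_orthonormal_frame_def orthonormal_family_iff image_lessThan_eq_setcompr)
  have frame_triv: "?frame X \<longleftrightarrow> ?triv X" if "X \<in> sets M" for X
  proof -
    have "V x \<in> grassmannian k" if "x \<in> X" for x
      using assms(3) sets.sets_into_space[OF \<open>X \<in> sets M\<close>] that by blast
    moreover have "{(x, u). x \<in> X \<and> u \<in> V x} = Sigma X V" by auto
    ultimately show ?thesis
      using orthonormal_frame_iff_measurable_trivialization[of X M V k] that
      by (simp add: measurable_orthonormal_frame_def orthonormal_family_iff image_lessThan_eq_setcompr
          measurable_trivialization_def linear_isometry_onto_Rk_def)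
  qed
  show ?thesis
    by (intro conjI bex_cong conj_cong refl) (simp_all add: grass_frame frame_triv)
qed

end
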